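(* Let $G$ be a bipartite super edge-magic simple graph with stable sets $X$ and $Y$, suppose $G\cong H_1\oplus H_2$ is a decomposition of $G$, and let $n\ge1$. Then $|\sigma_{S_{2n}(G;H_1,H_2)}|\ge (n+1)|\sigma_G|$.
   Context: For a $(p,q)$-graph $G$ ($p$ vertices, $q$ edges), an edge-magic labeling is a bijection $f:V(G)\cup E(G)\to[1,p+q]$ such that $f(x)+f(xy)+f(y)$ equals a constant (the valence) for every edge $xy$; it is super edge-magic if moreover $f(V(G))=[1,p]$. For a graph $H$, $\sigma_H$ is the set of integers that are valences of super edge-magic labelings of $H$. A decomposition $G\cong H_1\oplus H_2$ means $H_1,H_2$ are subgraphs of $G$ whose edge sets partition $E(G)$. Writing $X=\{x_i\}_{i=1}^s$, $Y=\{y_j\}_{j=1}^t$, $S_{2n}(G;H_1,H_2)$ is the graph with vertex set $X\cup Y\cup\bigcup_{k=1}^n X_k\cup\bigcup_{k=1}^n Y_k$, where $X_k=\{x_i^k\}_{i=1}^s$, $Y_k=\{y_j^k\}_{j=1}^t$ are new vertices, and edge set $E(G)\cup\{x_iy_j^k: x_iy_j\in E(H_1),\,k\in[1,n]\}\cup\{x_i^ky_j: x_iy_j\in E(H_2),\,k\in[1,n]\}$. *)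

theory Defs
  imports Main
begin

definition simple_graph :: "'a set \<Rightarrow> 'a set set \<Rightarrow> bool" where
  "simple_graph V E \<longleftrightarrow> finite V \<and> (\<forall>e\<in>E. \<exists>x y. x \<noteq> y \<and> x \<in> V \<and> y \<in> V \<and> e = {x, y})"

definition bipartite_with :: "'a set \<Rightarrow> 'a set set \<Rightarrow> 'a set \<Rightarrow> 'a set \<Rightarrow> bool" where
  "bipartite_with V E X Y \<longleftrightarrow> X \<union> Y = V \<and> X \<inter> Y = {} \<and>
     (\<forall>e\<in>E. \<exists>x\<in>X. \<exists>y\<in>Y. e = {x, y})"

definition edge_magic_labeling ::
  "'a set \<Rightarrow> 'a set set \<Rightarrow> ('a + 'a set \<Rightarrow> nat) \<Rightarrow> nat \<Rightarrow> bool" where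
  "edge_magic_labeling V E f k \<longleftrightarrow>
     bij_betw f (Inl ` V \<union> Inr ` E) {1 .. card V + card E} \<and>
     (\<forall>e\<in>E. \<forall>x y. e = {x, y} \<longrightarrow> f (Inl x) + f (Inr e) + f (Inl y) = k)"

definition super_edge_magic_labeling ::
  "'a set \<Rightarrow> 'a set set \<Rightarrow> ('a + 'a set \<Rightarrow> nat) \<Rightarrow> nat \<Rightarrow> bool" where
  "super_edge_magic_labeling V E f k \<longleftrightarrow>
     edge_magic_labeling V E f k \<and> f ` (Inl ` V) = {1 .. card V}"

definition super_edge_magic :: "'a set \<Rightarrow> 'a set set \<Rightarrow> bool" where
  "super_edge_magic V E \<longleftrightarrow> (\<exists>f k. super_edge_magic_labeling V E f k)"

definition sigma_sem :: "'a set \<Rightarrow> 'a set set \<Rightarrow> nat set" where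
  "sigma_sem V E = {k. \<exists>f. super_edge_magic_labeling V E f k}"

text \<open>The graph S_{2n}(G;H1,H2). Vertex (v,0) is the original v; (v,k), 1\<le>k\<le>n,
  is the k-th copy (x_i^k or y_j^k).\<close>
definition S2n_V :: "'a set \<Rightarrow> nat \<Rightarrow> ('a \<times> nat) set" where
  "S2n_V V n = V \<times> {0..n}"

definition S2n_E :: "'a set set \<Rightarrow> 'a set \<Rightarrow> 'a set \<Rightarrow> 'a set set \<Rightarrow> 'a set set \<Rightarrow> nat
    \<Rightarrow> ('a \<times> nat) set set" where
  "S2n_E E X Y E1 E2 n =
     ((\<lambda>e. (\<lambda>v. (v, 0)) ` e) ` E) \<union>
     {{(x, 0), (y, k)} | x y k. x \<in> X \<and> y \<in> Y \<and> {x, y} \<in> E1 \<and> k \<in> {1..n}} \<union>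
     {{(x, k), (y, 0)} | x y k. x \<in> X \<and> y \<in> Y \<and> {x, y} \<in> E2 \<and> k \<in> {1..n}}"

end

theory Submission
  imports Defs
begin

text \<open>Let \<open>f\<close> be a super edge-magic labeling of \<open>G\<close> with valence \<open>k\<close> and let \<open>0 \<le> t \<le> n\<close>.
  Label the copy \<open>(v, i)\<close> of a vertex \<open>v\<close> by \<open>(n + 1) (f v - 1) + ((i + t) mod (n + 1)) + 1\<close>:
  every vertex of \<open>G\<close> owns a block of \<open>n + 1\<close> consecutive labels, in which the original vertex
  sits at position \<open>t + 1\<close>. Every edge of \<open>S\<^sub>2\<^sub>n\<close> is the \<open>j\<close>-th copy of an edge \<open>xy\<close> of \<open>G\<close>
  and joins an original vertex to a vertex of level \<open>j\<close>, so the labels of its ends add up to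
  \<open>(n + 1) (f x + f y - 2) + t + 1 + ((j + t) mod (n + 1) + 1)\<close>. Since the sums
  \<open>f x + f y = k - f (xy)\<close> over the edges of \<open>G\<close> are distinct and consecutive, so are these; a vertex labeling with consecutive edge sums
  extends to a super edge-magic labeling, here with valence \<open>(n + 1) (k - 2) + t + 2\<close>.
  Different pairs \<open>(k, t)\<close> give different valences, whence \<open>n + 1\<close> valences of \<open>S\<^sub>2\<^sub>n\<close> per
  valence of \<open>G\<close>.\<close>

lemma mult_add_less_cancel:
  fixes m a b r s :: nat
  assumes "r < m" "s < m" "m * a + r = m * b + s"
  shows "a = b" and "r = s"
proof -
  have "(m * a + r) div m = a" "(m * b + s) div m = b"
    "(m * a + r) mod m = r" "(m * b + s) mod m = s"
    using assms(1,2) by simp_all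
  then show "a = b" "r = s" using assms(3) by metis+
qed

lemma inj_on_card_eq_imp_bij_betw:
  assumes "inj_on g A" "g ` A \<subseteq> B" "finite B" "card A = card B"
  shows "bij_betw g A B"
  using assms card_subset_eq[of B "g ` A"] card_image[of g A] by (simp add: bij_betw_def)

lemma simple_graph_finite_edges:
  assumes "simple_graph V E"
  shows "finite E"
proof (rule finite_subset)
  show "E \<subseteq> Pow V" using assms unfolding simple_graph_def by auto
  show "finite (Pow V)" using assms unfolding simple_graph_def by simp
qed

lemma simple_graph_edgeE:
  assumes "simple_graph V E" "e \<in> E"
  obtains x y where "x \<noteq> y" "x \<in> V" "y \<in> V" "e = {x, y}"
  using assms unfolding simple_graph_def by blast

context
  fixes V :: "'a set" and E :: "'a set set" and f :: "'a + 'a set \<Rightarrow> nat" and k :: nat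
  assumes sem: "super_edge_magic_labeling V E f k"
begin

lemma sem_label_bij: "bij_betw f (Inl ` V \<union> Inr ` E) {1 .. card V + card E}"
  using sem by (simp add: super_edge_magic_labeling_def edge_magic_labeling_def)

lemma sem_vertex_labels: "f ` Inl ` V = {1 .. card V}"
  using sem by (simp add: super_edge_magic_labeling_def)

lemma sem_label_inj: "inj_on f (Inl ` V \<union> Inr ` E)"
  using sem_label_bij by (rule bij_betw_imp_inj_on)

lemma sem_magic: "{x, y} \<in> E \<Longrightarrow> f (Inl x) + f (Inr {x, y}) + f (Inl y) = k"
  using sem by (simp add: super_edge_magic_labeling_def edge_magic_labeling_def)

lemma sem_vertex_label: "x \<in> V \<Longrightarrow> f (Inl x) \<in> {1 .. card V}"
  using sem_vertex_labels by blast

lemma sem_edge_label: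
  assumes "e \<in> E"
  shows "f (Inr e) \<in> {card V <.. card V + card E}"
proof -
  have range: "f (Inr e) \<in> {1 .. card V + card E}"
    using bij_betwE[OF sem_label_bij] assms by blast
  have "f (Inr e) \<notin> f ` Inl ` V"
    using inj_on_image_mem_iff[OF sem_label_inj, of "Inr e" "Inl ` V"] assms by auto
  then have "f (Inr e) \<notin> {1 .. card V}"
    using sem_vertex_labels by simp
  then show ?thesis using range by auto
qed

lemma sem_valence_bounds:
  assumes "simple_graph V E" "E \<noteq> {}"
  shows "card V + card E + 2 \<le> k" and "k \<le> 3 * card V + card E"
proof -
  have "card E > 0"
    using assms simple_graph_finite_edges card_gt_0_iff by blast
  then have "card V + card E \<in> f ` (Inl ` V \<union> Inr ` E)"
    using bij_betw_imp_surj_on[OF sem_label_bij] by auto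
  moreover have "card V + card E \<notin> f ` Inl ` V"
    using sem_vertex_labels \<open>card E > 0\<close> by simp
  ultimately obtain e where e: "e \<in> E" "f (Inr e) = card V + card E"
    by (auto simp: image_Un)
  obtain x y where "x \<in> V" "y \<in> V" "e = {x, y}"
    using simple_graph_edgeE[OF assms(1) e(1)] by metis
  then have "k = f (Inl x) + (card V + card E) + f (Inl y)"
       and "f (Inl x) \<ge> 1" "f (Inl y) \<ge> 1"
    using sem_magic[of x y] sem_vertex_label e by auto
  then show "card V + card E + 2 \<le> k" by linarith
  obtain x' y' where "x' \<in> V" "y' \<in> V" "{x', y'} \<in> E"
    using assms simple_graph_edgeE by (metis ex_in_conv)
  then have "k = f (Inl x') + f (Inr {x', y'}) + f (Inl y')"
       and "f (Inl x') \<le> card V" "f (Inl y') \<le> card V"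
       and "f (Inr {x', y'}) \<le> card V + card E"
    using sem_magic[of x' y'] sem_vertex_label sem_edge_label by auto
  then show "k \<le> 3 * card V + card E" by linarith
qed

end

lemma finite_sigma_sem:
  assumes "simple_graph V E" "E \<noteq> {}"
  shows "finite (sigma_sem V E)"
proof (rule finite_subset)
  show "sigma_sem V E \<subseteq> {.. 3 * card V + card E}"
    using sem_valence_bounds(2)[OF _ assms] by (auto simp: sigma_sem_def)
qed simp

lemma sigma_sem_no_edges:
  assumes "E = {}" "super_edge_magic V E"
  shows "sigma_sem V E = UNIV"
  using assms
  by (auto simp: sigma_sem_def super_edge_magic_def super_edge_magic_labeling_def
      edge_magic_labeling_def)

lemma super_edge_magic_labeling_of_edge_sums:
  fixes V :: "'a set" and E :: "'a set set" and g :: "'a \<Rightarrow> nat" and s :: nat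
  defines "k \<equiv> card V + card E + s"
  assumes "simple_graph V E" and g: "bij_betw g V {1 .. card V}"
    and sums_inj: "inj_on (sum g) E" and sums: "sum g ` E \<subseteq> {s ..< s + card E}"
  shows "super_edge_magic_labeling V E (case_sum g (\<lambda>e. k - sum g e)) k"
proof -
  let ?h = "case_sum g (\<lambda>e. k - sum g e)"
  have "bij_betw (sum g) E {s ..< s + card E}"
    using inj_on_card_eq_imp_bij_betw[OF sums_inj sums] by simp
  moreover have "bij_betw (\<lambda>m. k - m) {s ..< s + card E} {card V + 1 .. card V + card E}"
    by (rule bij_betw_byWitness[where f' = "\<lambda>m. k - m"]) (auto simp: k_def)
  ultimately have "bij_betw ((\<lambda>m. k - m) \<circ> sum g) E {card V + 1 .. card V + card E}"
    by (rule bij_betw_trans)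
  then have edges: "bij_betw ?h (Inr ` E) {card V + 1 .. card V + card E}"
    by (auto simp: bij_betw_def inj_on_def image_image)
  have vertices: "bij_betw ?h (Inl ` V) {1 .. card V}"
    using g by (auto simp: bij_betw_def inj_on_def image_image)
  have "bij_betw ?h (Inl ` V \<union> Inr ` E) ({1 .. card V} \<union> {card V + 1 .. card V + card E})"
    by (rule bij_betw_combine[OF vertices edges]) auto
  moreover have "{1 .. card V} \<union> {card V + 1 .. card V + card E} = {1 .. card V + card E}"
    by auto
  moreover have "\<forall>e\<in>E. \<forall>x y. e = {x, y} \<longrightarrow> ?h (Inl x) + ?h (Inr e) + ?h (Inl y) = k"
  proof (intro ballI allI impI)
    fix e x y assume "e \<in> E" "e = {x, y}"
    obtain a b where "a \<noteq> b" "e = {a, b}"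
      using simple_graph_edgeE[OF assms(2) \<open>e \<in> E\<close>] by metis
    then have "sum g e = g x + g y" using \<open>e = {x, y}\<close> by (auto simp: doubleton_eq_iff)
    moreover have "sum g e \<le> k" using sums \<open>e \<in> E\<close> by (force simp: k_def)
    ultimately show "?h (Inl x) + ?h (Inr e) + ?h (Inl y) = k" by simp
  qed
  ultimately show ?thesis
    using bij_betw_imp_surj_on[OF vertices]
    by (simp add: super_edge_magic_labeling_def edge_magic_labeling_def)
qed

locale S2n_construction =
  fixes V X Y :: "'a set" and E E1 E2 :: "'a set set" and n :: nat
  assumes simple: "simple_graph V E" and bipartite: "bipartite_with V E X Y"
    and decomposition: "E1 \<union> E2 = E" "E1 \<inter> E2 = {}"
begin

text \<open>Copy \<open>j\<close> of the edge \<open>xy\<close> (\<open>x \<in> X\<close>, \<open>y \<in> Y\<close>) is the paper's \<open>x y\<^sup>j\<close> if \<open>xy \<in> H\<^sub>1\<close> and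
  \<open>x\<^sup>j y\<close> if \<open>xy \<in> H\<^sub>2\<close>; copy 0 is \<open>xy\<close> itself.\<close>
definition edge_copy :: "'a \<Rightarrow> 'a \<Rightarrow> nat \<Rightarrow> ('a \<times> nat) set" where
  "edge_copy x y j = (if {x, y} \<in> E1 then {(x, 0), (y, j)} else {(x, j), (y, 0)})"

definition indexed_edges :: "('a \<times> 'a \<times> nat) set" where
  "indexed_edges = {(x, y, j). x \<in> X \<and> y \<in> Y \<and> {x, y} \<in> E \<and> j \<le> n}"

lemma edge_copy_0: "edge_copy x y 0 = {(x, 0), (y, 0)}"
  by (simp add: edge_copy_def insert_commute)

lemma edge_bipartite: "e \<in> E \<Longrightarrow> \<exists>x\<in>X. \<exists>y\<in>Y. e = {x, y}"
  using bipartite by (simp add: bipartite_with_def)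

lemma indexed_edgesD:
  assumes "(x, y, j) \<in> indexed_edges"
  shows "x \<in> X" "y \<in> Y" "{x, y} \<in> E" "j \<le> n" "x \<in> V" "y \<in> V" "x \<noteq> y"
  using assms bipartite by (auto simp: indexed_edges_def bipartite_with_def)

lemma bipartite_doubleton_eq:
  assumes "x \<in> X" "y \<in> Y" "x' \<in> X" "y' \<in> Y" "{x, y} = {x', y'}"
  shows "x = x'" "y = y'"
  using assms bipartite by (auto simp: bipartite_with_def doubleton_eq_iff)

lemma edge_copy_in_S2n_E:
  assumes "(x, y, j) \<in> indexed_edges"
  shows "edge_copy x y j \<in> S2n_E E X Y E1 E2 n"
proof -
  note xyj = indexed_edgesD[OF assms]
  consider "j = 0" | "j \<noteq> 0" "{x, y} \<in> E1" | "j \<noteq> 0" "{x, y} \<in> E2" "{x, y} \<notin> E1"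
    using xyj(3) decomposition by blast
  then show ?thesis
  proof cases
    case 1
    then have "edge_copy x y j = (\<lambda>v. (v, 0)) ` {x, y}" by (simp add: edge_copy_0)
    then show ?thesis using xyj unfolding S2n_E_def by blast
  next
    case 2
    then show ?thesis using xyj unfolding S2n_E_def edge_copy_def by auto
  next
    case 3
    then show ?thesis using xyj unfolding S2n_E_def edge_copy_def by auto
  qed
qed

lemma S2n_E_eq: "S2n_E E X Y E1 E2 n = (\<lambda>(x, y, j). edge_copy x y j) ` indexed_edges"
proof (intro equalityI subsetI)
  fix e' assume "e' \<in> S2n_E E X Y E1 E2 n"
  then consider (original) e where "e \<in> E" "e' = (\<lambda>v. (v, 0)) ` e"
    | (first) x y j where "x \<in> X" "y \<in> Y" "{x, y} \<in> E1" "j \<in> {1..n}" "e' = {(x, 0), (y, j)}"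
    | (second) x y j where "x \<in> X" "y \<in> Y" "{x, y} \<in> E2" "j \<in> {1..n}" "e' = {(x, j), (y, 0)}"
    unfolding S2n_E_def by blast
  then show "e' \<in> (\<lambda>(x, y, j). edge_copy x y j) ` indexed_edges"
  proof cases
    case original
    then obtain x y where "x \<in> X" "y \<in> Y" "e = {x, y}" using edge_bipartite by blast
    with original have "(x, y, 0) \<in> indexed_edges" "e' = edge_copy x y 0"
      by (auto simp: indexed_edges_def edge_copy_0)
    then show ?thesis by force
  next
    case first
    then have "(x, y, j) \<in> indexed_edges" "e' = edge_copy x y j"
      using decomposition by (auto simp: indexed_edges_def edge_copy_def)
    then show ?thesis by force
  next
    case second
    then have "(x, y, j) \<in> indexed_edges" "e' = edge_copy x y j"
      using decomposition by (auto simp: indexed_edges_def edge_copy_def)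
    then show ?thesis by force
  qed
qed (auto dest: edge_copy_in_S2n_E)

lemma card_indexed_edges: "card indexed_edges = card E * (n + 1)"
proof -
  have "bij_betw (\<lambda>(x, y, j). ({x, y}, j)) indexed_edges (E \<times> {..n})"
  proof (rule bij_betw_imageI)
    show "inj_on (\<lambda>(x, y, j). ({x, y}, j)) indexed_edges"
      by (auto intro!: inj_onI dest: indexed_edgesD bipartite_doubleton_eq)
    show "(\<lambda>(x, y, j). ({x, y}, j)) ` indexed_edges = E \<times> {..n}"
    proof (intro equalityI subsetI)
      fix p assume "p \<in> E \<times> {..n}"
      then obtain e j where "p = (e, j)" "e \<in> E" "j \<le> n" by blast
      moreover obtain x y where "x \<in> X" "y \<in> Y" "e = {x, y}"
        using edge_bipartite \<open>e \<in> E\<close> by blast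
      ultimately show "p \<in> (\<lambda>(x, y, j). ({x, y}, j)) ` indexed_edges"
        by (force simp: indexed_edges_def)
    qed (auto simp: indexed_edges_def)
  qed
  then show ?thesis by (simp add: bij_betw_same_card card_cartesian_product)
qed

lemma simple_graph_S2n: "simple_graph (S2n_V V n) (S2n_E E X Y E1 E2 n)"
  unfolding simple_graph_def
proof (intro conjI ballI)
  show "finite (S2n_V V n)" using simple by (simp add: simple_graph_def S2n_V_def)
  fix e' assume "e' \<in> S2n_E E X Y E1 E2 n"
  then obtain x y j where "(x, y, j) \<in> indexed_edges" "e' = edge_copy x y j"
    by (auto simp: S2n_E_eq)
  then show "\<exists>u w. u \<noteq> w \<and> u \<in> S2n_V V n \<and> w \<in> S2n_V V n \<and> e' = {u, w}"
    using indexed_edgesD[of x y j] by (auto simp: S2n_V_def edge_copy_def)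
qed

lemma S2n_E_nonempty:
  assumes "E \<noteq> {}"
  shows "S2n_E E X Y E1 E2 n \<noteq> {}"
proof -
  obtain e where "e \<in> E" using assms by blast
  then obtain x y where "x \<in> X" "y \<in> Y" "e = {x, y}" using edge_bipartite by blast
  with \<open>e \<in> E\<close> have "(x, y, 0) \<in> indexed_edges" by (simp add: indexed_edges_def)
  then show ?thesis by (auto simp: S2n_E_eq)
qed

end

locale S2n_lifting = S2n_construction +
  fixes f :: "'a + 'a set \<Rightarrow> nat" and k t :: nat
  assumes sem: "super_edge_magic_labeling V E f k"
    and t_le: "t \<le> n" and edges_nonempty: "E \<noteq> {}"
begin

definition shift :: "nat \<Rightarrow> nat" where
  "shift j = (j + t) mod (n + 1) + 1"

definition lift :: "'a \<times> nat \<Rightarrow> nat" where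
  "lift v = (n + 1) * (f (Inl (fst v)) - 1) + shift (snd v)"

lemma shift_bounds: "1 \<le> shift j" "shift j \<le> n + 1"
  by (simp_all add: shift_def)

lemma shift_0: "shift 0 = t + 1"
  using t_le by (simp add: shift_def)

lemma shift_inj:
  assumes "i \<le> n" "j \<le> n" "shift i = shift j"
  shows "i = j"
proof -
  have "(i + t) mod (n + 1) = (j + t) mod (n + 1)" using assms(3) by (simp add: shift_def)
  moreover have "i + t < 2 * (n + 1)" "j + t < 2 * (n + 1)" using assms(1,2) t_le by auto
  ultimately show ?thesis using assms(1,2) by (auto simp: mod_if split: if_splits)
qed

lemma lift_eq_mult_add:
  assumes "x \<in> V"
  shows "lift (x, i) = (n + 1) * (f (Inl x) - 1) + (shift i - 1) + 1"
  using shift_bounds(1)[of i] by (simp add: lift_def)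

lemma lift_bij: "bij_betw lift (S2n_V V n) {1 .. card (S2n_V V n)}"
proof (rule inj_on_card_eq_imp_bij_betw)
  show "inj_on lift (S2n_V V n)"
  proof (intro inj_onI, clarify)
    fix x i x' i'
    assume "(x, i) \<in> S2n_V V n" "(x', i') \<in> S2n_V V n" and eq: "lift (x, i) = lift (x', i')"
    then have x: "x \<in> V" "x' \<in> V" and i: "i \<le> n" "i' \<le> n" by (auto simp: S2n_V_def)
    have "shift i - 1 < n + 1" "shift i' - 1 < n + 1"
      using shift_bounds[of i] shift_bounds[of i'] by linarith+
    moreover have "(n + 1) * (f (Inl x) - 1) + (shift i - 1)
        = (n + 1) * (f (Inl x') - 1) + (shift i' - 1)"
      using eq by (simp add: lift_eq_mult_add x)
    ultimately have "f (Inl x) - 1 = f (Inl x') - 1" "shift i - 1 = shift i' - 1"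
      by (rule mult_add_less_cancel)+
    moreover have "1 \<le> f (Inl x)" "1 \<le> f (Inl x')"
      using sem_vertex_label[OF sem] x by auto
    ultimately have "f (Inl x) = f (Inl x')" "shift i = shift i'"
      using shift_bounds(1)[of i] shift_bounds(1)[of i'] by arith+
    then show "x = x' \<and> i = i'"
      using inj_on_eq_iff[OF sem_label_inj[OF sem]] shift_inj x i by auto
  qed
  have card: "card (S2n_V V n) = card V * (n + 1)"
    by (simp add: S2n_V_def card_cartesian_product)
  show "lift ` S2n_V V n \<subseteq> {1 .. card (S2n_V V n)}"
  proof clarify
    fix x i assume "(x, i) \<in> S2n_V V n"
    then have "x \<in> V" by (simp add: S2n_V_def)
    then have "f (Inl x) \<in> {1 .. card V}" by (rule sem_vertex_label[OF sem])
    then obtain a where a: "f (Inl x) = Suc a" "Suc a \<le> card V"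
      by (cases "f (Inl x)") auto
    have "lift (x, i) \<le> (n + 1) * a + (n + 1)"
      using shift_bounds(2)[of i] by (simp add: lift_def a)
    also have "\<dots> = (n + 1) * Suc a" by simp
    also have "\<dots> \<le> (n + 1) * card V" using a(2) by (rule mult_le_mono2)
    finally show "lift (x, i) \<in> {1 .. card (S2n_V V n)}"
      using shift_bounds(1)[of i] card by (simp add: lift_def mult.commute)
  qed
qed (simp_all add: S2n_V_def card_cartesian_product)

lemma sum_lift_edge_copy:
  assumes "(x, y, j) \<in> indexed_edges"
  shows "sum lift (edge_copy x y j)
    = (n + 1) * (f (Inl x) + f (Inl y) - 2) + (shift j - 1) + (t + 2)"
proof -
  note xy = indexed_edgesD[OF assms]
  obtain a b where ab: "f (Inl x) = Suc a" "f (Inl y) = Suc b"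
    using sem_vertex_label[OF sem] xy(5,6) by (metis atLeastAtMost_iff not0_implies_Suc not_one_le_zero)
  obtain c where c: "shift j = Suc c" using shift_bounds(1)[of j] by (cases "shift j") auto
  have "sum lift (edge_copy x y j) = (n + 1) * a + (n + 1) * b + (t + 1) + shift j"
    using xy(7) shift_0 by (simp add: edge_copy_def lift_def ab)
  then show ?thesis by (simp add: ab c algebra_simps)
qed

lemma sum_lift_edge_copy_inj:
  assumes "(x, y, j) \<in> indexed_edges" "(x', y', j') \<in> indexed_edges"
    and "sum lift (edge_copy x y j) = sum lift (edge_copy x' y' j')"
  shows "(x, y, j) = (x', y', j')"
proof -
  note xy = indexed_edgesD[OF assms(1)] and xy' = indexed_edgesD[OF assms(2)]
  have "shift j - 1 < n + 1" "shift j' - 1 < n + 1"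
    using shift_bounds[of j] shift_bounds[of j'] by linarith+
  moreover have "(n + 1) * (f (Inl x) + f (Inl y) - 2) + (shift j - 1)
      = (n + 1) * (f (Inl x') + f (Inl y') - 2) + (shift j' - 1)"
    using assms(3) by (simp add: sum_lift_edge_copy assms(1,2))
  ultimately have "f (Inl x) + f (Inl y) - 2 = f (Inl x') + f (Inl y') - 2"
    and "shift j - 1 = shift j' - 1"
    by (rule mult_add_less_cancel)+
  moreover have "1 \<le> f (Inl x)" "1 \<le> f (Inl y)" "1 \<le> f (Inl x')" "1 \<le> f (Inl y')"
    using sem_vertex_label[OF sem] xy(5,6) xy'(5,6) by auto
  ultimately have "f (Inl x) + f (Inl y) = f (Inl x') + f (Inl y')" "shift j = shift j'"
    using shift_bounds(1)[of j] shift_bounds(1)[of j'] by arith+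
  then have "f (Inr {x, y}) = f (Inr {x', y'})"
    using sem_magic[OF sem, of x y] sem_magic[OF sem, of x' y'] xy(3) xy'(3) by linarith
  then have "{x, y} = {x', y'}"
    using inj_on_eq_iff[OF sem_label_inj[OF sem]] xy(3) xy'(3) by auto
  then have "x = x'" "y = y'"
    using bipartite_doubleton_eq xy(1,2) xy'(1,2) by blast+
  moreover have "j = j'" using shift_inj xy(4) xy'(4) \<open>shift j = shift j'\<close> by blast
  ultimately show ?thesis by simp
qed

lemma card_S2n_E: "card (S2n_E E X Y E1 E2 n) = card E * (n + 1)"
proof -
  have "inj_on (\<lambda>(x, y, j). edge_copy x y j) indexed_edges"
    by (intro inj_onI) (auto dest: sum_lift_edge_copy_inj)
  then show ?thesis by (simp add: S2n_E_eq card_image card_indexed_edges)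
qed

lemma sum_lift_inj: "inj_on (sum lift) (S2n_E E X Y E1 E2 n)"
  by (intro inj_onI) (auto simp: S2n_E_eq dest: sum_lift_edge_copy_inj)

lemma sum_lift_range:
  defines "s \<equiv> (n + 1) * (k - card V - card E - 2) + t + 2"
  shows "sum lift ` S2n_E E X Y E1 E2 n \<subseteq> {s ..< s + card (S2n_E E X Y E1 E2 n)}"
proof
  fix l assume "l \<in> sum lift ` S2n_E E X Y E1 E2 n"
  then obtain x y j where xyj: "(x, y, j) \<in> indexed_edges" and l: "l = sum lift (edge_copy x y j)"
    by (auto simp: S2n_E_eq)
  note xy = indexed_edgesD[OF xyj]
  define m where "m = k - card V - card E - 2"
  have "card V + card E + 2 \<le> k"
    using sem_valence_bounds(1)[OF sem simple edges_nonempty] .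
  moreover have "f (Inl x) + f (Inl y) + f (Inr {x, y}) = k"
    using sem_magic[OF sem xy(3)] by simp
  moreover have "f (Inr {x, y}) \<in> {card V <.. card V + card E}"
    using sem_edge_label[OF sem xy(3)] .
  ultimately have "m \<le> f (Inl x) + f (Inl y) - 2" "f (Inl x) + f (Inl y) - 2 < m + card E"
    unfolding m_def by auto
  then obtain d where d: "f (Inl x) + f (Inl y) - 2 = m + d" "d < card E"
    using less_diff_conv2 le_add_diff_inverse by (metis add_less_cancel_left)
  have "(n + 1) * (d + 1) \<le> (n + 1) * card E"
    using d(2) by (intro mult_le_mono2) simp
  then have "(n + 1) * d + (shift j - 1) < (n + 1) * card E"
    using shift_bounds(2)[of j] by (simp add: algebra_simps)
  then show "l \<in> {s ..< s + card (S2n_E E X Y E1 E2 n)}"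
    by (simp add: l sum_lift_edge_copy xyj d(1) s_def m_def card_S2n_E algebra_simps)
qed

lemma lifted_valence_in_sigma:
  "(n + 1) * (k - 2) + t + 2 \<in> sigma_sem (S2n_V V n) (S2n_E E X Y E1 E2 n)"
proof -
  let ?s = "(n + 1) * (k - card V - card E - 2) + t + 2"
  obtain r where "k = card V + card E + 2 + r"
    using sem_valence_bounds(1)[OF sem simple edges_nonempty] le_Suc_ex by blast
  then have valence: "card (S2n_V V n) + card (S2n_E E X Y E1 E2 n) + ?s = (n + 1) * (k - 2) + t + 2"
    by (simp add: S2n_V_def card_cartesian_product card_S2n_E algebra_simps)
  have "super_edge_magic_labeling (S2n_V V n) (S2n_E E X Y E1 E2 n)
      (case_sum lift (\<lambda>e. card (S2n_V V n) + card (S2n_E E X Y E1 E2 n) + ?s - sum lift e))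
      (card (S2n_V V n) + card (S2n_E E X Y E1 E2 n) + ?s)"
    by (rule super_edge_magic_labeling_of_edge_sums[OF simple_graph_S2n lift_bij sum_lift_inj
          sum_lift_range])
  then show ?thesis unfolding sigma_sem_def valence by blast
qed

end

lemma (in S2n_construction) shifted_valence_in_sigma_S2n:
  assumes "k \<in> sigma_sem V E" "t \<le> n" "E \<noteq> {}"
  shows "(n + 1) * (k - 2) + t + 2 \<in> sigma_sem (S2n_V V n) (S2n_E E X Y E1 E2 n)"
proof -
  obtain f where "super_edge_magic_labeling V E f k" using assms(1) by (auto simp: sigma_sem_def)
  then interpret S2n_lifting V X Y E E1 E2 n f k t
    using assms(2,3) by unfold_locales
  show ?thesis by (rule lifted_valence_in_sigma)
qed

lemma inj_on_shifted_valence: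
  fixes n :: nat
  shows "inj_on (\<lambda>(k, t). (n + 1) * (k - 2) + t + 2) ({2..} \<times> {..n})"
proof (rule inj_onI)
  fix p q :: "nat \<times> nat"
  assume "p \<in> {2..} \<times> {..n}" "q \<in> {2..} \<times> {..n}"
    and eq: "(\<lambda>(k, t). (n + 1) * (k - 2) + t + 2) p = (\<lambda>(k, t). (n + 1) * (k - 2) + t + 2) q"
  then obtain k t k' t' where pq: "p = (k, t)" "q = (k', t')" "2 \<le> k" "2 \<le> k'"
    and t: "t < n + 1" "t' < n + 1"
    by fastforce
  moreover have "(n + 1) * (k - 2) + t = (n + 1) * (k' - 2) + t'" using eq pq by simp
  then have "k - 2 = k' - 2" "t = t'" using mult_add_less_cancel[OF t] by blast+
  with pq show "p = q" by simp
qed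

theorem mainTheorem10:
  fixes V X Y :: "'a set" and E E1 E2 :: "'a set set" and n :: nat
  assumes "simple_graph V E"
    and "bipartite_with V E X Y"
    and "super_edge_magic V E"
    and "E1 \<union> E2 = E" and "E1 \<inter> E2 = {}"
    and "n \<ge> 1"
  shows "card (sigma_sem (S2n_V V n) (S2n_E E X Y E1 E2 n)) \<ge> (n + 1) * card (sigma_sem V E)"
proof (cases "E = {}")
  case True
  \<comment> \<open>Then \<open>\<sigma>\<^sub>G\<close> is infinite, so its \<open>card\<close> is 0.\<close>
  then have "sigma_sem V E = UNIV" using assms(3) by (rule sigma_sem_no_edges)
  then show ?thesis by simp
next
  case False
  interpret S2n_construction V X Y E E1 E2 n
    using assms(1,2,4,5) by unfold_locales
  let ?valence = "\<lambda>(k, t). (n + 1) * (k - 2) + t + 2"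
  let ?\<sigma>' = "sigma_sem (S2n_V V n) (S2n_E E X Y E1 E2 n)"
  have "sigma_sem V E \<subseteq> {2..}"
    using sem_valence_bounds(1)[OF _ assms(1) False] by (force simp: sigma_sem_def)
  then have "inj_on ?valence (sigma_sem V E \<times> {..n})"
    by (blast intro: inj_on_subset[OF inj_on_shifted_valence])
  moreover have "?valence ` (sigma_sem V E \<times> {..n}) \<subseteq> ?\<sigma>'"
    using shifted_valence_in_sigma_S2n False by auto
  moreover have "finite ?\<sigma>'"
    using finite_sigma_sem[OF simple_graph_S2n S2n_E_nonempty[OF False]] .
  ultimately have "card (sigma_sem V E \<times> {..n}) \<le> card ?\<sigma>'"
    by (rule card_inj_on_le)
  then show ?thesis by (simp add: card_cartesian_product mult.commute)
qed

end
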